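(* Let $\psi:\mathbb{R}_{>0}\to\mathbb{R}_{>0}$ be monotonic with $\psi(h)\to0$, and let $0<\varepsilon<1$. There exist constants $c_1,c_2>0$ (depending only on $\varepsilon$) such that for every open disc $B\subset[\varepsilon,1]^2$ of radius $r<1$ there is $H_0=H_0(B)$ such that for all $(a,b)\in\mathbb{Z}_{\ge0}^2$ with $h_{a,b}\ge H_0$, \[ c_1|B|\frac{\psi(h_{a,b})}{h_{a,b}}\le|\sigma_{a,b}\cap B|\le c_2|B|\frac{\psi(h_{a,b})}{h_{a,b}}. \] Moreover, for such $(a,b)$, every $c\in\mathbb{Z}_{\ge0}$ with $\sigma_{a,b}(c)\cap B\neq\emptyset$ satisfies $\tfrac{\varepsilon}{2}h_{a,b}<c<2h_{a,b}$.
   Context: For $(a,b)\in\mathbb{Z}_{\ge0}^2$, $h_{a,b}=\max(a,b)$. For $c\in\mathbb{Z}_{\ge0}$ define $\sigma_{a,b}(c)=\{(x,y)\in[0,1]^2:|a^2x+b^2y-c^2|<\psi(h_{a,b})\}$ and $\sigma_{a,b}=\bigcup_{c\in\mathbb{Z}_{\ge0}}\sigma_{a,b}(c)$. $|\cdot|$ is Lebesgue measure on $\mathbb{R}^2$. *)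

theory Defs
  imports "HOL-Analysis.Analysis"
begin

definition hab :: "nat \<Rightarrow> nat \<Rightarrow> nat" where
  "hab a b = max a b"

definition sigma_c :: "(real \<Rightarrow> real) \<Rightarrow> nat \<Rightarrow> nat \<Rightarrow> nat \<Rightarrow> (real \<times> real) set" where
  "sigma_c \<psi> a b c = {(x, y). x \<in> {0..1} \<and> y \<in> {0..1} \<and>
      \<bar>real a ^ 2 * x + real b ^ 2 * y - real c ^ 2\<bar> < \<psi> (real (hab a b))}"

definition sigma :: "(real \<Rightarrow> real) \<Rightarrow> nat \<Rightarrow> nat \<Rightarrow> (real \<times> real) set" where
  "sigma \<psi> a b = (\<Union>c. sigma_c \<psi> a b c)"

end

theory Submission
  imports Defs
begin

text \<open>
  Say \<open>b \<ge> a\<close>, so \<open>h = b\<close>; the other case follows by exchanging the coordinates.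
  For fixed \<open>x\<close>, the slice of \<open>\<sigma>(a, b)\<close> consists of the \<open>y\<close> for which \<open>a\<^sup>2 x + b\<^sup>2 y\<close>
  lies within \<open>\<psi>(h)\<close> of a perfect square \<open>c\<^sup>2\<close>: a disjoint union of intervals of length
  \<open>2\<psi>(h)/b\<^sup>2\<close>, one for each \<open>c\<close> with \<open>c\<^sup>2\<close> in a window \<open>[U, V]\<close> of length about \<open>b\<^sup>2 \<ell>\<close>,
  where \<open>\<ell>\<close> is the length of the slice. On \<open>[\<epsilon>, 1]\<^sup>2\<close> the window lies in
  \<open>[\<epsilon>h\<^sup>2/2, 2h\<^sup>2]\<close>, so it contains \<open>sqrt V - sqrt U \<plusminus> 1 = (V - U)/(sqrt V + sqrt U) \<plusminus> 1\<close>
  squares, between \<open>h\<ell>/4\<close> and \<open>3h\<ell>/\<epsilon>\<close> of them once \<open>h\<ell>\<close> is large. Hence every slice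
  has measure comparable to \<open>\<ell>\<psi>(h)/h\<close>, and Tonelli's theorem gives the bounds on squares
  inscribed in and circumscribed about the disc. The range of \<open>c\<close> is read off from
  \<open>\<epsilon>h\<^sup>2 \<le> a\<^sup>2 x + b\<^sup>2 y \<le> 2h\<^sup>2\<close>.
\<close>

lemma nat_squares_between_eq:
  assumes "0 \<le> U" "0 \<le> V"
  shows "{c::nat. U \<le> real c ^ 2 \<and> real c ^ 2 \<le> V} = {nat \<lceil>sqrt U\<rceil>..nat \<lfloor>sqrt V\<rfloor>}"
proof -
  have "U \<le> real c ^ 2 \<longleftrightarrow> nat \<lceil>sqrt U\<rceil> \<le> c" for c :: nat
    using real_sqrt_le_iff[of U "real c ^ 2"] by (simp add: nat_le_iff ceiling_le_iff)
  moreover have "real c ^ 2 \<le> V \<longleftrightarrow> c \<le> nat \<lfloor>sqrt V\<rfloor>" for c :: nat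
    using real_sqrt_le_iff[of "real c ^ 2" V] assms by (simp add: le_nat_iff le_floor_iff)
  ultimately show ?thesis by auto
qed

lemma card_nat_squares_between_ge_sqrt_diff:
  assumes "0 \<le> U" "0 \<le> V"
  shows "sqrt V - sqrt U - 1 \<le> card {c::nat. U \<le> real c ^ 2 \<and> real c ^ 2 \<le> V}"
proof -
  have "0 \<le> sqrt U" using assms by simp
  then have "sqrt V - 1 \<le> real (nat \<lfloor>sqrt V\<rfloor>)" "real (nat \<lceil>sqrt U\<rceil>) \<le> sqrt U + 1"
    by linarith+
  then have "sqrt V - sqrt U - 1 \<le> real (Suc (nat \<lfloor>sqrt V\<rfloor>) - nat \<lceil>sqrt U\<rceil>)"
    by linarith
  then show ?thesis using assms by (simp add: nat_squares_between_eq)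
qed

lemma card_nat_squares_between_le_sqrt_diff:
  assumes "0 \<le> U" "U \<le> V"
  shows "card {c::nat. U \<le> real c ^ 2 \<and> real c ^ 2 \<le> V} \<le> sqrt V - sqrt U + 1"
proof -
  have "sqrt U \<le> sqrt V" "0 \<le> sqrt U" using assms by auto
  then have "real (Suc (nat \<lfloor>sqrt V\<rfloor>) - nat \<lceil>sqrt U\<rceil>) \<le> sqrt V - sqrt U + 1"
    by linarith
  then show ?thesis using assms by (simp add: nat_squares_between_eq)
qed

lemma sqrt_diff_sqrt:
  assumes "0 \<le> U" "0 \<le> V"
  shows "sqrt V - sqrt U = (V - U) / (sqrt V + sqrt U)"
proof (cases "sqrt V + sqrt U = 0")
  case False
  have "(sqrt V - sqrt U) * (sqrt V + sqrt U) = V - U"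
    using assms by (simp add: algebra_simps flip: power2_eq_square)
  with False show ?thesis by (simp add: field_simps)
next
  case True
  then have "sqrt V = 0" "sqrt U = 0" using assms by (smt (verit) real_sqrt_ge_zero)+
  then show ?thesis by simp
qed

lemma card_nat_squares_between_ge:
  assumes "0 \<le> U" "U \<le> V" "sqrt V \<le> s"
  shows "(V - U) / (2 * s) - 1 \<le> card {c::nat. U \<le> real c ^ 2 \<and> real c ^ 2 \<le> V}"
proof -
  have "(V - U) / (2 * s) \<le> sqrt V - sqrt U"
  proof (cases "U = V")
    case False
    then have "0 < sqrt V" "sqrt U \<le> sqrt V" using assms by auto
    then have "(V - U) / (2 * s) \<le> (V - U) / (sqrt V + sqrt U)"
      using assms real_sqrt_ge_zero[of U] by (intro divide_left_mono mult_pos_pos) linarith+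
    then show ?thesis using assms by (simp add: sqrt_diff_sqrt)
  qed simp
  then show ?thesis using card_nat_squares_between_ge_sqrt_diff[of U V] assms by linarith
qed

lemma card_nat_squares_between_le:
  assumes "0 < m" "m ^ 2 \<le> U" "U \<le> V"
  shows "card {c::nat. U \<le> real c ^ 2 \<and> real c ^ 2 \<le> V} \<le> (V - U) / m + 1"
proof -
  have "0 \<le> U" using assms(2) zero_le_power2[of m] by linarith
  have "m \<le> sqrt U" by (rule real_le_rsqrt[OF assms(2)])
  then have "m \<le> sqrt V + sqrt U" using real_sqrt_ge_zero[of V] \<open>0 \<le> U\<close> assms by linarith
  then have "(V - U) / (sqrt V + sqrt U) \<le> (V - U) / m"
    using assms by (intro divide_left_mono mult_pos_pos) auto
  then have "sqrt V - sqrt U \<le> (V - U) / m"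
    using \<open>0 \<le> U\<close> assms by (simp add: sqrt_diff_sqrt)
  then show ?thesis
    using card_nat_squares_between_le_sqrt_diff[OF \<open>0 \<le> U\<close> assms(3)] by linarith
qed

definition near_square_interval :: "real \<Rightarrow> real \<Rightarrow> real \<Rightarrow> nat \<Rightarrow> real set" where
  "near_square_interval k n p c = {(real c ^ 2 - k - p) / n ^ 2 <..< (real c ^ 2 - k + p) / n ^ 2}"

definition near_square_set :: "real \<Rightarrow> real \<Rightarrow> real \<Rightarrow> real \<Rightarrow> real \<Rightarrow> real set" where
  "near_square_set k n p y0 y1 = {y \<in> {y0..y1}. \<exists>c::nat. \<bar>k + n ^ 2 * y - real c ^ 2\<bar> < p}"

lemma mem_near_square_interval:
  assumes "n \<noteq> 0"
  shows "y \<in> near_square_interval k n p c \<longleftrightarrow> \<bar>k + n ^ 2 * y - real c ^ 2\<bar> < p"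
  using assms by (auto simp: near_square_interval_def field_simps abs_less_iff)

lemma measure_near_square_interval:
  assumes "n \<noteq> 0" "0 \<le> p"
  shows "measure lborel (near_square_interval k n p c) = 2 * p / n ^ 2"
  using assms by (simp add: near_square_interval_def field_simps)

lemma near_square_interval_sets [measurable]: "near_square_interval k n p c \<in> sets borel"
  by (simp add: near_square_interval_def)

lemma near_square_interval_fmeasurable: "near_square_interval k n p c \<in> fmeasurable lborel"
  unfolding near_square_interval_def
  by (rule fmeasurableI2[OF fmeasurable_cbox[of "(real c ^ 2 - k - p) / n ^ 2"
        "(real c ^ 2 - k + p) / n ^ 2"]]) auto

lemma disjoint_family_near_square_interval:
  assumes "n \<noteq> 0" "p \<le> 1/2"
  shows "disjoint_family (near_square_interval k n p)"
  unfolding disjoint_family_on_def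
proof (intro ballI impI)
  fix c d :: nat
  assume "c \<noteq> d"
  then have "c ^ 2 \<noteq> d ^ 2" by simp
  then have "1 \<le> \<bar>real (c ^ 2) - real (d ^ 2)\<bar>" by linarith
  then show "near_square_interval k n p c \<inter> near_square_interval k n p d = {}"
    using assms by (auto simp: mem_near_square_interval)
qed

lemma measure_UN_near_square_interval:
  assumes "n \<noteq> 0" "0 \<le> p" "p \<le> 1/2" "finite C"
  shows "measure lborel (\<Union>c\<in>C. near_square_interval k n p c) = card C * (2 * p / n ^ 2)"
proof -
  have "measure lborel (\<Union>c\<in>C. near_square_interval k n p c)
      = (\<Sum>c\<in>C. measure lborel (near_square_interval k n p c))"
    using assms disjoint_family_near_square_interval[of n p k]
    by (intro measure_finite_Union)
      (auto simp: fmeasurableD fmeasurableD2 near_square_interval_fmeasurable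
        disjoint_family_on_def)
  then show ?thesis using assms by (simp add: measure_near_square_interval)
qed

lemma near_square_set_eq:
  assumes "n \<noteq> 0"
  shows "near_square_set k n p y0 y1 = {y0..y1} \<inter> (\<Union>c. near_square_interval k n p c)"
  using assms by (auto simp: near_square_set_def mem_near_square_interval)

lemma near_square_set_fmeasurable: "n \<noteq> 0 \<Longrightarrow> near_square_set k n p y0 y1 \<in> fmeasurable lborel"
  by (rule fmeasurableI2[OF fmeasurable_cbox[of y0 y1]])
    (auto simp: near_square_set_eq near_square_interval_def)

lemma UN_near_square_interval_subset:
  assumes "n \<noteq> 0"
  shows "(\<Union>c\<in>{c. k + n ^ 2 * y0 + p \<le> real c ^ 2 \<and> real c ^ 2 \<le> k + n ^ 2 * y1 - p}.
      near_square_interval k n p c) \<subseteq> near_square_set k n p y0 y1"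
proof clarify
  fix c y
  assume c: "k + n ^ 2 * y0 + p \<le> real c ^ 2" "real c ^ 2 \<le> k + n ^ 2 * y1 - p"
    and "y \<in> near_square_interval k n p c"
  then have close: "\<bar>k + n ^ 2 * y - real c ^ 2\<bar> < p"
    using assms by (simp add: mem_near_square_interval)
  with c have "n ^ 2 * y0 \<le> n ^ 2 * y" "n ^ 2 * y \<le> n ^ 2 * y1" by linarith+
  with close show "y \<in> near_square_set k n p y0 y1"
    using assms by (auto simp: near_square_set_def)
qed

lemma near_square_set_subset_UN:
  assumes "n \<noteq> 0"
  shows "near_square_set k n p y0 y1 \<subseteq> (\<Union>c\<in>{c. k + n ^ 2 * y0 - p \<le> real c ^ 2 \<and>
      real c ^ 2 \<le> k + n ^ 2 * y1 + p}. near_square_interval k n p c)"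
proof
  fix y
  assume "y \<in> near_square_set k n p y0 y1"
  then obtain c :: nat where "y0 \<le> y" "y \<le> y1" and close: "\<bar>k + n ^ 2 * y - real c ^ 2\<bar> < p"
    by (auto simp: near_square_set_def)
  then have "n ^ 2 * y0 \<le> n ^ 2 * y" "n ^ 2 * y \<le> n ^ 2 * y1"
    by (simp_all add: mult_left_mono)
  with close have "k + n ^ 2 * y0 - p \<le> real c ^ 2 \<and> real c ^ 2 \<le> k + n ^ 2 * y1 + p"
    by auto
  with close show "y \<in> (\<Union>c\<in>{c. k + n ^ 2 * y0 - p \<le> real c ^ 2 \<and>
      real c ^ 2 \<le> k + n ^ 2 * y1 + p}. near_square_interval k n p c)"
    using assms by (auto simp: mem_near_square_interval)
qed

lemma measure_near_square_set_ge:
  fixes k n p y0 y1 :: real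
  assumes n: "1 \<le> n" and p: "0 < p" "p \<le> 1/2"
    and bottom: "0 \<le> k + n ^ 2 * y0" and top: "k + n ^ 2 * y1 \<le> 2 * n ^ 2"
    and long: "24 \<le> n * (y1 - y0)"
  shows "(y1 - y0) * p / (2 * n) \<le> measure lborel (near_square_set k n p y0 y1)"
proof -
  define U where "U = k + n ^ 2 * y0 + p"
  define V where "V = k + n ^ 2 * y1 - p"
  define C where "C = {c::nat. U \<le> real c ^ 2 \<and> real c ^ 2 \<le> V}"
  have "24 \<le> n * (n * (y1 - y0))"
    using long n mult_mono[of 1 n 24 "n * (y1 - y0)"] by simp
  then have VU: "V - U = n ^ 2 * (y1 - y0) - 2 * p" "24 \<le> n ^ 2 * (y1 - y0)"
    by (simp_all add: U_def V_def algebra_simps power2_eq_square)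
  have U: "0 \<le> U" "U \<le> V" using bottom p VU by (simp_all add: U_def)
  have "sqrt 2 \<le> 3 / 2" by (subst real_sqrt_le_iff') (simp_all add: power2_eq_square)
  then have "sqrt (2 * n ^ 2) \<le> 3 / 2 * n" using n by (simp add: real_sqrt_mult)
  moreover have "sqrt V \<le> sqrt (2 * n ^ 2)" using top p by (simp add: V_def)
  ultimately have "sqrt V \<le> 3 / 2 * n" by linarith
  from card_nat_squares_between_ge[OF U this]
  have "(V - U) / (3 * n) - 1 \<le> card C" by (simp add: C_def)
  moreover have "(V - U) / (3 * n) \<ge> n * (y1 - y0) / 3 - 1"
    using VU n p by (simp add: field_simps power2_eq_square)
  ultimately have card: "n * (y1 - y0) / 4 \<le> card C" using long by linarith
  have "(y1 - y0) * p / (2 * n) = n * (y1 - y0) / 4 * (2 * p / n ^ 2)"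
    using n by (simp add: field_simps power2_eq_square)
  also have "\<dots> \<le> card C * (2 * p / n ^ 2)"
    using card p by (intro mult_right_mono) auto
  also have "\<dots> = measure lborel (\<Union>c\<in>C. near_square_interval k n p c)"
    using measure_UN_near_square_interval[of n p C k] n p U
    by (simp add: C_def nat_squares_between_eq)
  also have "\<dots> \<le> measure lborel (near_square_set k n p y0 y1)"
    using n UN_near_square_interval_subset[of n k p y0 y1]
    by (intro measure_mono_fmeasurable near_square_set_fmeasurable) (auto simp: C_def U_def V_def)
  finally show ?thesis .
qed

lemma measure_near_square_set_le:
  fixes k n p y0 y1 e :: real
  assumes n: "1 \<le> n" and p: "0 < p" "p \<le> 1/2" and e: "0 < e" "e \<le> 1"
    and bottom: "(e * n / 2) ^ 2 \<le> k + n ^ 2 * y0 - p"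
    and long: "3 \<le> n * (y1 - y0)"
  shows "measure lborel (near_square_set k n p y0 y1) \<le> 6 * (y1 - y0) * p / (e * n)"
proof -
  define U where "U = k + n ^ 2 * y0 - p"
  define V where "V = k + n ^ 2 * y1 + p"
  define C where "C = {c::nat. U \<le> real c ^ 2 \<and> real c ^ 2 \<le> V}"
  have "0 \<le> y1 - y0" using long n by (smt (verit) mult_nonneg_nonpos)
  then have "0 \<le> n ^ 2 * (y1 - y0)" by simp
  then have VU: "V - U = n ^ 2 * (y1 - y0) + 2 * p" "U \<le> V"
    using p by (simp_all add: U_def V_def algebra_simps)
  have "0 < e * n / 2" using e n by simp
  from card_nat_squares_between_le[OF this bottom[folded U_def] VU(2)]
  have "card C \<le> 2 * n * (y1 - y0) / e + 4 * p / (e * n) + 1"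
    using e n by (simp add: C_def VU field_simps power2_eq_square)
  also have "\<dots> \<le> (2 * (n * (y1 - y0)) + 2 + e) / e"
    using e n p by (simp add: field_simps)
  also have "\<dots> \<le> 3 * (n * (y1 - y0)) / e"
    using e long by (intro divide_right_mono) auto
  finally have card: "card C \<le> 3 * (n * (y1 - y0)) / e" .
  have "0 \<le> U" using bottom by (simp add: U_def) (smt (verit) zero_le_power2)
  then have finite: "finite C" using VU by (simp add: C_def nat_squares_between_eq)
  have "measure lborel (near_square_set k n p y0 y1)
      \<le> measure lborel (\<Union>c\<in>C. near_square_interval k n p c)"
    using n finite near_square_set_subset_UN[of n k p y0 y1]
    by (intro measure_mono_fmeasurable fmeasurableD[OF near_square_set_fmeasurable]
        fmeasurable.finite_UN near_square_interval_fmeasurable) (auto simp: C_def U_def V_def)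
  also have "\<dots> = card C * (2 * p / n ^ 2)"
    using measure_UN_near_square_interval[of n p C k] n p finite by simp
  also have "\<dots> \<le> 3 * (n * (y1 - y0)) / e * (2 * p / n ^ 2)"
    using card p by (intro mult_right_mono) auto
  also have "\<dots> = 6 * (y1 - y0) * p / (e * n)"
    using e n by (simp add: field_simps power2_eq_square)
  finally show ?thesis .
qed

lemma emeasure_lborel_eq_nn_integral_sections:
  fixes A :: "('a::euclidean_space \<times> 'b::euclidean_space) set"
  assumes "A \<in> sets lborel"
  shows "emeasure lborel A = (\<integral>\<^sup>+x. emeasure lborel (Pair x -` A) \<partial>lborel)"
  using assms unfolding lborel_prod[symmetric] by (rule lborel.emeasure_pair_measure_alt)

lemma emeasure_lborel_vimage_swap:
  fixes A :: "('a::euclidean_space \<times> 'b::euclidean_space) set"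
  assumes "A \<in> sets lborel"
  shows "emeasure lborel (prod.swap -` A) = emeasure lborel A"
proof -
  have "prod.swap \<in> borel_measurable (borel :: ('b \<times> 'a) measure)"
    by (intro borel_measurable_continuous_onI continuous_intros)
  then have "prod.swap -` A \<in> sets (lborel :: ('b \<times> 'a) measure)"
    using measurable_sets[of prod.swap borel borel A] assms by simp
  then have "emeasure lborel (prod.swap -` A)
      = (\<integral>\<^sup>+y. emeasure lborel ((\<lambda>x. (x, y)) -` A) \<partial>lborel)"
    by (simp add: emeasure_lborel_eq_nn_integral_sections vimage_def)
  also have "\<dots> = emeasure lborel A"
    using assms unfolding lborel_prod[symmetric]
    by (rule lborel_pair.emeasure_pair_measure_alt2[symmetric])
  finally show ?thesis .
qed

lemma measure_lborel_le_by_sections: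
  fixes A :: "(real \<times> real) set"
  assumes "A \<in> sets lborel" "A \<subseteq> {x0..x1} \<times> UNIV" "x0 \<le> x1" "0 \<le> M"
    and "\<And>x. x \<in> {x0..x1} \<Longrightarrow> emeasure lborel (Pair x -` A) \<le> M"
  shows "measure lborel A \<le> (x1 - x0) * M"
proof -
  have "emeasure lborel (Pair x -` A) \<le> ennreal M * indicator {x0..x1} x" for x
  proof (cases "x \<in> {x0..x1}")
    case False
    then have "Pair x -` A = {}" using assms(2) by auto
    then show ?thesis by simp
  qed (use assms in simp)
  then have "emeasure lborel A \<le> (\<integral>\<^sup>+x. ennreal M * indicator {x0..x1} x \<partial>lborel)"
    using assms by (simp add: emeasure_lborel_eq_nn_integral_sections nn_integral_mono)
  also have "\<dots> = ennreal ((x1 - x0) * M)"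
    using assms by (simp add: nn_integral_cmult_indicator ennreal_mult' mult.commute)
  finally show ?thesis
    using assms by (simp add: measure_def enn2real_leI)
qed

lemma measure_lborel_ge_by_sections:
  fixes A :: "(real \<times> real) set"
  assumes "A \<in> sets lborel" "emeasure lborel A \<noteq> \<infinity>" "x0 \<le> x1" "0 \<le> m"
    and "\<And>x. x \<in> {x0..x1} \<Longrightarrow> m \<le> measure lborel (Pair x -` A)"
  shows "(x1 - x0) * m \<le> measure lborel A"
proof -
  have "ennreal m * indicator {x0..x1} x \<le> emeasure lborel (Pair x -` A)" for x
  proof (cases "x \<in> {x0..x1}")
    case True
    then have "ennreal m \<le> ennreal (measure lborel (Pair x -` A))" using assms by simp
    also have "\<dots> \<le> emeasure lborel (Pair x -` A)"
      by (simp add: measure_def ennreal_enn2real_if)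
    finally show ?thesis using True by simp
  qed simp
  then have "(\<integral>\<^sup>+x. ennreal m * indicator {x0..x1} x \<partial>lborel) \<le> emeasure lborel A"
    using assms by (simp add: emeasure_lborel_eq_nn_integral_sections nn_integral_mono)
  then have "ennreal ((x1 - x0) * m) \<le> emeasure lborel A"
    using assms by (simp add: nn_integral_cmult_indicator ennreal_mult' mult.commute)
  then show ?thesis
    using assms by (simp add: emeasure_eq_ennreal_measure)
qed

lemma hab_commute: "hab a b = hab b a"
  by (simp add: hab_def max.commute)

lemma box_sets: "{x0..x1} \<times> {y0..y1} \<in> sets (lborel :: (real \<times> real) measure)"
  by (simp add: closed_Times)

lemma sigma_c_sets: "sigma_c \<psi> a b c \<in> sets lborel"
proof -
  let ?p = "\<psi> (real (hab a b))"
  have "open {z. \<bar>real a ^ 2 * fst z + real b ^ 2 * snd z - real c ^ 2\<bar> < ?p}"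
    by (intro open_Collect_less continuous_intros)
  moreover have "sigma_c \<psi> a b c
      = {0..1} \<times> {0..1} \<inter> {z. \<bar>real a ^ 2 * fst z + real b ^ 2 * snd z - real c ^ 2\<bar> < ?p}"
    by (auto simp: sigma_c_def)
  ultimately show ?thesis using box_sets by simp
qed

lemma sigma_inter_box_sets: "sigma \<psi> a b \<inter> {x0..x1} \<times> {y0..y1} \<in> sets lborel"
  unfolding sigma_def using sigma_c_sets box_sets by blast

lemma sigma_inter_box_fmeasurable: "sigma \<psi> a b \<inter> {x0..x1} \<times> {y0..y1} \<in> fmeasurable lborel"
proof (rule fmeasurableI2[OF fmeasurable_cbox[of "(x0, y0)" "(x1, y1)"]])
  show "sigma \<psi> a b \<inter> {x0..x1} \<times> {y0..y1} \<subseteq> cbox (x0, y0) (x1, y1)"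
    by (auto simp: cbox_Pair_eq)
qed (rule sigma_inter_box_sets)

lemma vimage_swap_sigma_inter_box:
  "prod.swap -` (sigma \<psi> a b \<inter> {x0..x1} \<times> {y0..y1}) = sigma \<psi> b a \<inter> {y0..y1} \<times> {x0..x1}"
  by (auto simp: sigma_def sigma_c_def hab_commute add.commute)

lemma measure_sigma_inter_box_swap:
  "measure lborel (sigma \<psi> b a \<inter> {y0..y1} \<times> {x0..x1})
    = measure lborel (sigma \<psi> a b \<inter> {x0..x1} \<times> {y0..y1})"
  by (metis measure_def emeasure_lborel_vimage_swap sigma_inter_box_sets
      vimage_swap_sigma_inter_box)

lemma Pair_vimage_sigma_inter_box:
  assumes "x \<in> {x0..x1}" "0 \<le> x0" "x1 \<le> 1" "0 \<le> y0" "y1 \<le> 1"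
  shows "Pair x -` (sigma \<psi> a b \<inter> {x0..x1} \<times> {y0..y1})
    = near_square_set (real a ^ 2 * x) (real b) (\<psi> (real (hab a b))) y0 y1"
  using assms by (auto simp: sigma_def sigma_c_def near_square_set_def)

lemma measure_sigma_inter_box_ge_if_a_le_b:
  assumes "a \<le> b" and box: "0 \<le> x0" "x0 \<le> x1" "x1 \<le> 1" "0 \<le> y0" "y1 \<le> 1"
    and p: "0 < \<psi> (real (hab a b))" "\<psi> (real (hab a b)) \<le> 1/2"
    and long: "24 \<le> real (hab a b) * (y1 - y0)"
  shows "(x1 - x0) * (y1 - y0) * \<psi> (real (hab a b)) / (2 * real (hab a b))
    \<le> measure lborel (sigma \<psi> a b \<inter> {x0..x1} \<times> {y0..y1})"
proof -
  have h: "hab a b = b" using \<open>a \<le> b\<close> by (simp add: hab_def)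
  then have "1 \<le> real b" using long by (cases b) auto
  have "(x1 - x0) * ((y1 - y0) * \<psi> (real b) / (2 * real b))
      \<le> measure lborel (sigma \<psi> a b \<inter> {x0..x1} \<times> {y0..y1})"
  proof (rule measure_lborel_ge_by_sections)
    show "sigma \<psi> a b \<inter> {x0..x1} \<times> {y0..y1} \<in> sets lborel"
      by (rule sigma_inter_box_sets)
    show "emeasure lborel (sigma \<psi> a b \<inter> {x0..x1} \<times> {y0..y1}) \<noteq> \<infinity>"
      using fmeasurableD2[OF sigma_inter_box_fmeasurable] by simp
    have "0 < y1 - y0"
      using zero_less_mult_pos[of "real b" "y1 - y0"] long \<open>1 \<le> real b\<close> h by simp
    then show "0 \<le> (y1 - y0) * \<psi> (real b) / (2 * real b)" using p h by simp
  next
    fix x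
    assume x: "x \<in> {x0..x1}"
    have "real a ^ 2 \<le> real b ^ 2" using \<open>a \<le> b\<close> by (simp add: power_mono)
    moreover have "real a ^ 2 * x \<le> real a ^ 2" "0 \<le> real a ^ 2 * x"
      using x box by (simp_all add: mult_left_le)
    moreover have "real b ^ 2 * y1 \<le> real b ^ 2" "0 \<le> real b ^ 2 * y0"
      using box by (simp_all add: mult_left_le)
    ultimately have "0 \<le> real a ^ 2 * x + real b ^ 2 * y0"
      "real a ^ 2 * x + real b ^ 2 * y1 \<le> 2 * real b ^ 2"
      by linarith+
    from measure_near_square_set_ge[OF \<open>1 \<le> real b\<close> p[unfolded h] this long[unfolded h]]
    show "(y1 - y0) * \<psi> (real b) / (2 * real b)
        \<le> measure lborel (Pair x -` (sigma \<psi> a b \<inter> {x0..x1} \<times> {y0..y1}))"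
      using Pair_vimage_sigma_inter_box[OF x box(1,3,4,5), of \<psi> a b] h by simp
  qed (fact box)
  then show ?thesis using h by simp
qed

lemma measure_sigma_inter_box_le_if_a_le_b:
  assumes "a \<le> b" and e: "0 < e" "e \<le> 1"
    and box: "e \<le> x0" "x0 \<le> x1" "x1 \<le> 1" "e \<le> y0" "y1 \<le> 1"
    and p: "0 < \<psi> (real (hab a b))" "\<psi> (real (hab a b)) \<le> 1/2"
    and eh: "1 \<le> e * real (hab a b)" and long: "3 \<le> real (hab a b) * (y1 - y0)"
  shows "measure lborel (sigma \<psi> a b \<inter> {x0..x1} \<times> {y0..y1})
    \<le> (x1 - x0) * (6 * (y1 - y0) * \<psi> (real (hab a b)) / (e * real (hab a b)))"
proof (rule measure_lborel_le_by_sections)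
  show "sigma \<psi> a b \<inter> {x0..x1} \<times> {y0..y1} \<in> sets lborel"
    by (rule sigma_inter_box_sets)
  have h: "hab a b = b" using \<open>a \<le> b\<close> by (simp add: hab_def)
  then have "1 \<le> real b" using eh e by (smt (verit) mult_left_le_one_le of_nat_0_le_iff)
  have "0 < y1 - y0"
    using zero_less_mult_pos[of "real b" "y1 - y0"] long \<open>1 \<le> real b\<close> h by simp
  then show "0 \<le> 6 * (y1 - y0) * \<psi> (real (hab a b)) / (e * real (hab a b))"
    using p e by simp
  fix x
  assume x: "x \<in> {x0..x1}"
  have "0 \<le> x0" "0 \<le> y0" using box e by auto
  note sections = Pair_vimage_sigma_inter_box[OF x this(1) box(3) this(2) box(5), of \<psi> a b]
  have "1 * 1 \<le> (e * real b) * real b" using eh h \<open>1 \<le> real b\<close> by (intro mult_mono) auto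
  then have "1 \<le> e * real b ^ 2" by (simp add: power2_eq_square mult.assoc)
  moreover have "e * (e * real b ^ 2) \<le> e * real b ^ 2" using e by (simp add: mult_left_le_one_le)
  moreover have "e * real b ^ 2 \<le> real b ^ 2 * y0"
    using box mult_right_mono[of e y0 "real b ^ 2"] by (simp add: mult.commute)
  moreover have "0 \<le> real a ^ 2 * x" using x box e by simp
  moreover have "(e * real b / 2) ^ 2 = e * (e * real b ^ 2) / 4" by (simp add: power2_eq_square)
  ultimately have "(e * real b / 2) ^ 2 \<le> real a ^ 2 * x + real b ^ 2 * y0 - \<psi> (real b)"
    using p h by simp
  from measure_near_square_set_le[OF \<open>1 \<le> real b\<close> p[unfolded h] e this long[unfolded h]]
  have "measure lborel (Pair x -` (sigma \<psi> a b \<inter> {x0..x1} \<times> {y0..y1}))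
      \<le> 6 * (y1 - y0) * \<psi> (real b) / (e * real b)"
    using sections h by simp
  moreover have "Pair x -` (sigma \<psi> a b \<inter> {x0..x1} \<times> {y0..y1}) \<in> fmeasurable lborel"
    using sections \<open>1 \<le> real b\<close> by (simp add: near_square_set_fmeasurable)
  ultimately show "emeasure lborel (Pair x -` (sigma \<psi> a b \<inter> {x0..x1} \<times> {y0..y1}))
      \<le> ennreal (6 * (y1 - y0) * \<psi> (real (hab a b)) / (e * real (hab a b)))"
    using h by (metis emeasure_eq_measure2 ennreal_leI)
qed (use box in auto)

lemma measure_sigma_inter_box_ge:
  assumes box: "0 \<le> x0" "x0 \<le> x1" "x1 \<le> 1" "0 \<le> y0" "y0 \<le> y1" "y1 \<le> 1"
    and p: "0 < \<psi> (real (hab a b))" "\<psi> (real (hab a b)) \<le> 1/2"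
    and long: "24 \<le> real (hab a b) * (x1 - x0)" "24 \<le> real (hab a b) * (y1 - y0)"
  shows "(x1 - x0) * (y1 - y0) * \<psi> (real (hab a b)) / (2 * real (hab a b))
    \<le> measure lborel (sigma \<psi> a b \<inter> {x0..x1} \<times> {y0..y1})"
proof (cases "a \<le> b")
  case True
  then show ?thesis using box p long by (intro measure_sigma_inter_box_ge_if_a_le_b)
next
  case False
  then have "(y1 - y0) * (x1 - x0) * \<psi> (real (hab b a)) / (2 * real (hab b a))
      \<le> measure lborel (sigma \<psi> b a \<inter> {y0..y1} \<times> {x0..x1})"
    using box p long by (intro measure_sigma_inter_box_ge_if_a_le_b) (simp_all add: hab_commute)
  then show ?thesis by (simp add: measure_sigma_inter_box_swap hab_commute mult.commute)
qed

lemma measure_sigma_inter_box_le: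
  assumes e: "0 < e" "e \<le> 1"
    and box: "e \<le> x0" "x0 \<le> x1" "x1 \<le> 1" "e \<le> y0" "y0 \<le> y1" "y1 \<le> 1"
    and p: "0 < \<psi> (real (hab a b))" "\<psi> (real (hab a b)) \<le> 1/2"
    and eh: "1 \<le> e * real (hab a b)"
    and long: "3 \<le> real (hab a b) * (x1 - x0)" "3 \<le> real (hab a b) * (y1 - y0)"
  shows "measure lborel (sigma \<psi> a b \<inter> {x0..x1} \<times> {y0..y1})
    \<le> 6 * (x1 - x0) * (y1 - y0) * \<psi> (real (hab a b)) / (e * real (hab a b))"
proof (cases "a \<le> b")
  case True
  then show ?thesis
    using measure_sigma_inter_box_le_if_a_le_b[where \<psi> = \<psi>, OF True e box(1-4,6) p eh long(2)]
    by (simp add: algebra_simps)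
next
  case False
  then have "measure lborel (sigma \<psi> b a \<inter> {y0..y1} \<times> {x0..x1})
      \<le> (y1 - y0) * (6 * (x1 - x0) * \<psi> (real (hab b a)) / (e * real (hab b a)))"
    using e box p eh long
    by (intro measure_sigma_inter_box_le_if_a_le_b) (simp_all add: hab_commute)
  then show ?thesis by (simp add: measure_sigma_inter_box_swap hab_commute algebra_simps)
qed

lemma measure_lborel_ball_pair:
  fixes z :: "real \<times> real"
  assumes "0 \<le> r"
  shows "measure lborel (ball z r) = pi * r ^ 2"
  using content_ball[OF assms, of z] by (simp add: unit_ball_vol_2 power2_eq_square)

lemma ball_subset_square:
  fixes z :: "real \<times> real"
  shows "ball z r \<subseteq> {fst z - r..fst z + r} \<times> {snd z - r..snd z + r}"
proof clarify
  fix x y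
  assume "(x, y) \<in> ball z r"
  then have "\<bar>fst z - x\<bar> < r" "\<bar>snd z - y\<bar> < r"
    using dist_fst_le[of z "(x, y)"] dist_snd_le[of z "(x, y)"] by (auto simp: dist_real_def)
  then show "x \<in> {fst z - r..fst z + r} \<and> y \<in> {snd z - r..snd z + r}" by auto
qed

lemma square_subset_ball:
  fixes z :: "real \<times> real"
  assumes "0 < r"
  shows "{fst z - r/2..fst z + r/2} \<times> {snd z - r/2..snd z + r/2} \<subseteq> ball z r"
proof clarify
  fix x y
  assume "x \<in> {fst z - r/2..fst z + r/2}" "y \<in> {snd z - r/2..snd z + r/2}"
  then have "\<bar>fst z - x\<bar> \<le> r/2" "\<bar>snd z - y\<bar> \<le> r/2"
    by (simp_all only: atLeastAtMost_iff abs_le_iff) linarith+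
  then have "(fst z - x) ^ 2 \<le> (r/2) ^ 2" "(snd z - y) ^ 2 \<le> (r/2) ^ 2"
    by (metis abs_ge_zero power2_abs power_mono)+
  then have "(fst z - x) ^ 2 + (snd z - y) ^ 2 \<le> 2 * (r/2) ^ 2" by simp
  also have "\<dots> < r ^ 2" using assms by (simp add: power_divide)
  finally have "(fst z - x) ^ 2 + (snd z - y) ^ 2 < r ^ 2" .
  then have "sqrt ((fst z - x) ^ 2 + (snd z - y) ^ 2) < r"
    using assms real_sqrt_less_mono by fastforce
  then show "(x, y) \<in> ball z r" by (cases z) (simp add: dist_Pair_Pair dist_real_def)
qed

lemma square_bounds_if_ball_subset:
  fixes z :: "real \<times> real"
  assumes "0 < r" "ball z r \<subseteq> {e..1} \<times> {e..1}"
  shows "e \<le> fst z - r" "fst z + r \<le> 1" "e \<le> snd z - r" "snd z + r \<le> 1"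
proof -
  have "cball z r \<subseteq> {e..1} \<times> {e..1}"
    using closure_minimal[OF assms(2)] assms(1) by (simp add: closed_Times)
  moreover have "(fst z - r, snd z) \<in> cball z r" "(fst z + r, snd z) \<in> cball z r"
    "(fst z, snd z - r) \<in> cball z r" "(fst z, snd z + r) \<in> cball z r"
    using assms(1) by (cases z; simp add: dist_Pair_Pair dist_real_def)+
  ultimately show "e \<le> fst z - r" "fst z + r \<le> 1" "e \<le> snd z - r" "snd z + r \<le> 1"
    by auto
qed

lemma sigma_inter_ball_fmeasurable:
  fixes z :: "real \<times> real"
  shows "sigma \<psi> a b \<inter> ball z r \<in> fmeasurable lborel"
proof (rule fmeasurableI2[OF sigma_inter_box_fmeasurable])
  let ?Q = "{fst z - r..fst z + r} \<times> {snd z - r..snd z + r}"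
  show "sigma \<psi> a b \<inter> ball z r \<subseteq> sigma \<psi> a b \<inter> ?Q"
    using ball_subset_square by blast
  have "sigma \<psi> a b \<inter> ball z r = sigma \<psi> a b \<inter> ?Q \<inter> ball z r"
    using ball_subset_square by blast
  then show "sigma \<psi> a b \<inter> ball z r \<in> sets lborel"
    using sigma_inter_box_sets by simp
qed

lemma measure_sigma_inter_ball_ge:
  fixes z :: "real \<times> real"
  assumes r: "0 < r" "ball z r \<subseteq> {0..1} \<times> {0..1}"
    and p: "0 < \<psi> (real (hab a b))" "\<psi> (real (hab a b)) \<le> 1/2"
    and long: "24 \<le> real (hab a b) * r"
  shows "1/8 * measure lborel (ball z r) * (\<psi> (real (hab a b)) / real (hab a b))
    \<le> measure lborel (sigma \<psi> a b \<inter> ball z r)"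
proof -
  let ?h = "real (hab a b)" and ?p = "\<psi> (real (hab a b))"
  let ?Q = "{fst z - r/2..fst z + r/2} \<times> {snd z - r/2..snd z + r/2}"
  have "1/8 * measure lborel (ball z r) * (?p / ?h) = pi / 4 * (r * r * ?p / (2 * ?h))"
    using measure_lborel_ball_pair[of r z] r by (simp add: power2_eq_square)
  also have "\<dots> \<le> r * r * ?p / (2 * ?h)"
    using pi_less_4 r p by (intro mult_left_le_one_le) auto
  also have "\<dots> \<le> measure lborel (sigma \<psi> a b \<inter> ?Q)"
    using measure_sigma_inter_box_ge[where \<psi> = \<psi>, of "fst z - r/2" "fst z + r/2"
        "snd z - r/2" "snd z + r/2" a b] square_bounds_if_ball_subset[OF r] r p long by simp
  also have "\<dots> \<le> measure lborel (sigma \<psi> a b \<inter> ball z r)"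
    using square_subset_ball[OF r(1), of z]
    by (intro measure_mono_fmeasurable sigma_inter_box_sets sigma_inter_ball_fmeasurable) auto
  finally show ?thesis .
qed

lemma measure_sigma_inter_ball_le:
  fixes z :: "real \<times> real"
  assumes e: "0 < e" "e \<le> 1" and r: "0 < r" "ball z r \<subseteq> {e..1} \<times> {e..1}"
    and p: "0 < \<psi> (real (hab a b))" "\<psi> (real (hab a b)) \<le> 1/2"
    and eh: "1 \<le> e * real (hab a b)" and long: "24 \<le> real (hab a b) * r"
  shows "measure lborel (sigma \<psi> a b \<inter> ball z r)
    \<le> 24 / e * measure lborel (ball z r) * (\<psi> (real (hab a b)) / real (hab a b))"
proof -
  let ?h = "real (hab a b)" and ?p = "\<psi> (real (hab a b))"
  let ?Q = "{fst z - r..fst z + r} \<times> {snd z - r..snd z + r}"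
  have "measure lborel (sigma \<psi> a b \<inter> ball z r) \<le> measure lborel (sigma \<psi> a b \<inter> ?Q)"
    using ball_subset_square[of z r]
    by (intro measure_mono_fmeasurable sigma_inter_box_fmeasurable
        fmeasurableD[OF sigma_inter_ball_fmeasurable]) auto
  also have "\<dots> \<le> 6 * (2 * r) * (2 * r) * ?p / (e * ?h)"
    using measure_sigma_inter_box_le[where \<psi> = \<psi>, OF e, of "fst z - r" "fst z + r"
        "snd z - r" "snd z + r" a b] square_bounds_if_ball_subset[OF r] r p eh long by simp
  also have "\<dots> = 24 / e * (r * r) * (?p / ?h)" by simp
  also have "\<dots> \<le> 24 / e * measure lborel (ball z r) * (?p / ?h)"
    using measure_lborel_ball_pair[of r z] r e p eh pi_gt3
    by (intro mult_right_mono mult_left_mono) (auto simp: power2_eq_square)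
  finally show ?thesis .
qed

lemma sigma_c_index_bounds:
  assumes e: "0 < e" "e \<le> 1" and xy: "(x, y) \<in> sigma_c \<psi> a b c" "e \<le> x" "e \<le> y"
    and eh: "1 \<le> e * real (hab a b)" and p: "\<psi> (real (hab a b)) \<le> 1/2"
  shows "e / 2 * real (hab a b) < real c" "real c < 2 * real (hab a b)"
proof -
  let ?h = "real (hab a b)"
  have "x \<le> 1" "y \<le> 1" and close: "\<bar>real a ^ 2 * x + real b ^ 2 * y - real c ^ 2\<bar> < \<psi> ?h"
    using xy by (auto simp: sigma_c_def)
  have h: "?h ^ 2 \<le> real a ^ 2 + real b ^ 2" "real a ^ 2 \<le> ?h ^ 2" "real b ^ 2 \<le> ?h ^ 2"
    by (auto simp: hab_def max_def power_mono)
  have "1 \<le> ?h" using eh e by (smt (verit) mult_left_le_one_le of_nat_0_le_iff)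
  have "1 * 1 \<le> (e * ?h) * ?h" using eh \<open>1 \<le> ?h\<close> by (intro mult_mono) auto
  then have "1 \<le> e * ?h ^ 2" by (simp add: power2_eq_square mult.assoc)
  have "e * ?h ^ 2 \<le> e * real a ^ 2 + e * real b ^ 2"
    using h e by (simp flip: distrib_left)
  also have "\<dots> \<le> real a ^ 2 * x + real b ^ 2 * y"
    using xy by (intro add_mono) (simp_all add: mult.commute mult_right_mono)
  finally have "e * ?h ^ 2 / 2 < real c ^ 2"
    using close p \<open>1 \<le> e * ?h ^ 2\<close> by linarith
  moreover have "e * (e * ?h ^ 2) \<le> e * ?h ^ 2" using e by (simp add: mult_left_le_one_le)
  then have "(e / 2 * ?h) ^ 2 \<le> e * ?h ^ 2 / 4" by (simp add: power2_eq_square mult_ac)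
  ultimately have "(e / 2 * ?h) ^ 2 < real c ^ 2"
    using \<open>1 \<le> e * ?h ^ 2\<close> by linarith
  then show "e / 2 * ?h < real c" by (rule power_less_imp_less_base) simp
  have "real a ^ 2 * x \<le> real a ^ 2" "real b ^ 2 * y \<le> real b ^ 2"
    using \<open>x \<le> 1\<close> \<open>y \<le> 1\<close> by (simp_all add: mult_left_le)
  then have "real c ^ 2 < 2 * ?h ^ 2 + 1/2"
    using close p h by linarith
  also have "\<dots> \<le> (2 * ?h) ^ 2"
    using one_le_power[OF \<open>1 \<le> ?h\<close>, of 2] by (simp only: power_mult_distrib power2_eq_square[of 2])
  finally have "real c ^ 2 < (2 * ?h) ^ 2" .
  then show "real c < 2 * ?h" by (rule power_less_imp_less_base) simp
qed

lemma sigma_inter_ball_estimates: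
  fixes z :: "real \<times> real"
  assumes e: "0 < e" "e \<le> 1" and r: "0 < r" "ball z r \<subseteq> {e..1} \<times> {e..1}"
    and p: "0 < \<psi> (real (hab a b))" "\<psi> (real (hab a b)) \<le> 1/2"
    and eh: "1 \<le> e * real (hab a b)" and long: "24 \<le> real (hab a b) * r"
  shows "1/8 * measure lborel (ball z r) * (\<psi> (real (hab a b)) / real (hab a b))
      \<le> measure lborel (sigma \<psi> a b \<inter> ball z r)
    \<and> measure lborel (sigma \<psi> a b \<inter> ball z r)
      \<le> 24 / e * measure lborel (ball z r) * (\<psi> (real (hab a b)) / real (hab a b))
    \<and> (\<forall>c. sigma_c \<psi> a b c \<inter> ball z r \<noteq> {} \<longrightarrow>
        e / 2 * real (hab a b) < real c \<and> real c < 2 * real (hab a b))"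
proof (intro conjI allI impI)
  have "ball z r \<subseteq> {0..1} \<times> {0..1}" using r(2) e by fastforce
  then show "1/8 * measure lborel (ball z r) * (\<psi> (real (hab a b)) / real (hab a b))
      \<le> measure lborel (sigma \<psi> a b \<inter> ball z r)"
    using measure_sigma_inter_ball_ge r(1) p long by blast
  show "measure lborel (sigma \<psi> a b \<inter> ball z r)
      \<le> 24 / e * measure lborel (ball z r) * (\<psi> (real (hab a b)) / real (hab a b))"
    using measure_sigma_inter_ball_le[where \<psi> = \<psi>, OF e r p eh long] .
next
  fix c
  assume "sigma_c \<psi> a b c \<inter> ball z r \<noteq> {}"
  then obtain x y where "(x, y) \<in> sigma_c \<psi> a b c" "(x, y) \<in> ball z r" by auto
  with r(2) have "(x, y) \<in> sigma_c \<psi> a b c" "e \<le> x" "e \<le> y" by auto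
  from sigma_c_index_bounds[OF e this eh p(2)]
  show "e / 2 * real (hab a b) < real c" "real c < 2 * real (hab a b)" by auto
qed

lemma eventually_sigma_inter_ball_estimates:
  fixes z :: "real \<times> real"
  assumes e: "0 < e" "e \<le> 1" and \<psi>: "\<forall>h>0. 0 < \<psi> h" "(\<psi> \<longlongrightarrow> 0) at_top"
    and r: "0 < r" "ball z r \<subseteq> {e..1} \<times> {e..1}"
  shows "\<exists>H0. \<forall>a b. H0 \<le> real (hab a b) \<longrightarrow>
      1/8 * measure lborel (ball z r) * (\<psi> (real (hab a b)) / real (hab a b))
        \<le> measure lborel (sigma \<psi> a b \<inter> ball z r)
    \<and> measure lborel (sigma \<psi> a b \<inter> ball z r)
        \<le> 24 / e * measure lborel (ball z r) * (\<psi> (real (hab a b)) / real (hab a b))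
    \<and> (\<forall>c. sigma_c \<psi> a b c \<inter> ball z r \<noteq> {} \<longrightarrow>
        e / 2 * real (hab a b) < real c \<and> real c < 2 * real (hab a b))"
proof -
  obtain N where N: "\<And>x. N \<le> x \<Longrightarrow> \<psi> x < 1/2"
    using order_tendstoD(2)[OF \<psi>(2), of "1/2"] by (auto simp: eventually_at_top_linorder)
  have "0 < \<psi> h \<and> \<psi> h \<le> 1/2 \<and> 1 \<le> e * h \<and> 24 \<le> h * r"
    if "max N (max (1/e) (24/r)) \<le> h" for h
  proof -
    have "0 < 1/e" using e by simp
    with that have "0 < h" by linarith
    with that show ?thesis using N[of h] \<psi>(1) e r by (auto simp: field_simps)
  qed
  then show ?thesis
    using e r
    by (intro exI[of _ "max N (max (1/e) (24/r))"] allI impI sigma_inter_ball_estimates) auto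
qed

theorem mainTheorem4:
  fixes \<epsilon> :: real
  assumes "0 < \<epsilon>" and "\<epsilon> < 1"
  shows "\<exists>c1 c2 :: real. c1 > 0 \<and> c2 > 0 \<and>
    (\<forall>\<psi> :: real \<Rightarrow> real.
      (\<forall>h>0. \<psi> h > 0) \<longrightarrow>
      (mono_on {0<..} \<psi> \<or> antimono_on {0<..} \<psi>) \<longrightarrow>
      (\<psi> \<longlongrightarrow> 0) at_top \<longrightarrow>
      (\<forall>(z :: real \<times> real) (r :: real).
         0 < r \<longrightarrow> r < 1 \<longrightarrow> ball z r \<subseteq> {\<epsilon>..1} \<times> {\<epsilon>..1} \<longrightarrow>
         (\<exists>H0 :: real. \<forall>a b :: nat. real (hab a b) \<ge> H0 \<longrightarrow>
            c1 * measure lborel (ball z r) * (\<psi> (real (hab a b)) / real (hab a b))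
              \<le> measure lborel (sigma \<psi> a b \<inter> ball z r)
            \<and> measure lborel (sigma \<psi> a b \<inter> ball z r)
              \<le> c2 * measure lborel (ball z r) * (\<psi> (real (hab a b)) / real (hab a b))
            \<and> (\<forall>c :: nat. sigma_c \<psi> a b c \<inter> ball z r \<noteq> {} \<longrightarrow>
                 \<epsilon> / 2 * real (hab a b) < real c \<and> real c < 2 * real (hab a b)))))"
  using assms
  by (intro exI[of _ "1/8"] exI[of _ "24 / \<epsilon>"] conjI allI impI
      eventually_sigma_inter_ball_estimates) auto

end
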